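(* Let $\tau\in(0,1]$ and let $p_1,p_2$ be distributions on a common countable domain (each extended by infinitely many zero-probability elements) satisfying $R_\tau(p_1,p_2)\le\epsilon$. Then there exists a bijection (relabeling) $\pi$ of the domain such that $$\sum_i\big|\max(p_1(i),\tau)-\max(p_2(\pi(i)),\tau)\big|\le 2\epsilon.$$
   Context: The histogram of a distribution $p$ is the map $h_p:(0,1]\to\mathbb{N}\cup\{0\}$, $h_p(x)=|\{a:p(a)=x\}|$; its probability mass at $x$ is $x h_p(x)$. For $\tau\in[0,1]$, $R_\tau(p_1,p_2)=R_\tau(h_{p_1},h_{p_2})$ is the $\tau$-truncated relative earthmover distance: the minimum, over all schemes moving the probability mass of $h_{p_1}$ to yield that of $h_{p_2}$, of the total cost, where moving one unit of mass from probability $x$ to probability $y$ costs $|\log\max(x,\tau)-\log\max(y,\tau)|$. *)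

theory Defs
  imports "HOL-Analysis.Analysis"
begin

definition is_distr :: "(nat \<Rightarrow> real) \<Rightarrow> bool" where
  "is_distr p \<longleftrightarrow> (\<forall>a. 0 \<le> p a) \<and> (p has_sum 1) UNIV \<and> infinite {a. p a = 0}"

definition hist :: "(nat \<Rightarrow> real) \<Rightarrow> real \<Rightarrow> nat" where
  "hist p x = card {a. p a = x}"

text \<open>A scheme m x y = amount of probability mass moved from probability x to
probability y, moving the mass of h_{p1} (x * h_{p1}(x) at x) to that of h_{p2}.\<close>
definition em_scheme :: "(nat \<Rightarrow> real) \<Rightarrow> (nat \<Rightarrow> real) \<Rightarrow> (real \<Rightarrow> real \<Rightarrow> real) \<Rightarrow> bool" where
  "em_scheme p1 p2 m \<longleftrightarrow>
     (\<forall>x y. 0 \<le> m x y) \<and>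
     (\<forall>x y. m x y \<noteq> 0 \<longrightarrow> x \<in> {0<..1} \<and> y \<in> {0<..1}) \<and>
     (\<forall>x\<in>{0<..1}. ((\<lambda>y. m x y) has_sum (x * real (hist p1 x))) {0<..1}) \<and>
     (\<forall>y\<in>{0<..1}. ((\<lambda>x. m x y) has_sum (y * real (hist p2 y))) {0<..1})"

text \<open>Total cost of a scheme (in ennreal, so non-summable costs are infinite).\<close>
definition em_cost :: "real \<Rightarrow> (real \<Rightarrow> real \<Rightarrow> real) \<Rightarrow> ennreal" where
  "em_cost \<tau> m = (\<Sum>\<^sub>\<infinity>(x,y)\<in>{0<..1::real}\<times>{0<..1::real}.
        ennreal (m x y * \<bar>ln (max x \<tau>) - ln (max y \<tau>)\<bar>))"

definition R_trunc :: "real \<Rightarrow> (nat \<Rightarrow> real) \<Rightarrow> (nat \<Rightarrow> real) \<Rightarrow> ennreal" where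
  "R_trunc \<tau> p1 p2 = (INF m\<in>{m. em_scheme p1 p2 m}. em_cost \<tau> m)"

end

theory Submission
  imports Defs
begin

text \<open>Write \<open>N\<^sub>j(t)\<close> for the number of elements with \<open>p\<^sub>j(i) \<ge> t\<close>. Matching the elements of
  \<open>p\<^sub>1\<close> and \<open>p\<^sub>2\<close> in decreasing order of probability (after padding with zero-probability
  elements), the cost \<open>\<Sum>\<^sub>i |max(p\<^sub>1(i),\<tau>) - max(p\<^sub>2(\<pi>(i)),\<tau>)|\<close> equals the layer-cake integral
  \<open>\<integral>\<^sub>\<tau>\<^sup>1 |N\<^sub>1(t) - N\<^sub>2(t)| dt\<close>, a finite sum over the grid of probabilities above \<open>\<tau>\<close>.
  On the other hand every earthmover scheme \<open>m\<close> satisfies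
  \<open>N\<^sub>1(t) - N\<^sub>2(t) = \<Sum> m(x,y) ([t \<le> x]/x - [t \<le> y]/y)\<close>, and integrating
  \<open>|[t \<le> x]/x - [t \<le> y]/y|\<close> over \<open>t > \<tau>\<close> gives at most \<open>2 |ln max(x,\<tau>) - ln max(y,\<tau>)|\<close>.
  So the matching costs at most twice any scheme.\<close>

text \<open>Weighting the indicators \<open>t \<mapsto> [t \<le> s]\<close>, \<open>t \<in> G\<close>, by the gaps of the grid
  \<open>{\<tau>} \<union> G\<close> represents \<open>s - \<tau>\<close> (lemma \<open>sum_grid_gap_upto\<close>).\<close>
definition grid_gap :: "real \<Rightarrow> real set \<Rightarrow> real \<Rightarrow> real" where
  "grid_gap \<tau> G t = t - Max (insert \<tau> {g\<in>G. g < t})"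

lemma grid_gap_pos:
  assumes "finite G" "\<forall>g\<in>G. \<tau> < g" "t \<in> G"
  shows "0 < grid_gap \<tau> G t"
  using assms by (simp add: grid_gap_def Max_less_iff)

lemma sum_grid_gap_upto:
  assumes "finite G" "\<forall>g\<in>G. \<tau> < g" "s \<in> insert \<tau> G"
  shows "(\<Sum>t\<in>G. grid_gap \<tau> G t * of_bool (t \<le> s)) = s - \<tau>"
  using assms
proof (induction G arbitrary: s rule: finite_linorder_max_induct)
  case empty
  then show ?case by simp
next
  case (insert b A)
  have gap_A: "grid_gap \<tau> (insert b A) t = grid_gap \<tau> A t" if "t \<in> A" for t
  proof -
    have "{g\<in>insert b A. g < t} = {g\<in>A. g < t}" using insert.hyps(2) that by auto
    then show ?thesis by (simp add: grid_gap_def)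
  qed
  have b_notin: "b \<notin> A" using insert.hyps(2) by auto
  have IH: "(\<Sum>t\<in>A. grid_gap \<tau> A t * of_bool (t \<le> s)) = s - \<tau>" if "s \<in> insert \<tau> A" for s
    using insert.IH insert.prems that by auto
  have split: "(\<Sum>t\<in>insert b A. grid_gap \<tau> (insert b A) t * of_bool (t \<le> s))
      = grid_gap \<tau> (insert b A) b * of_bool (b \<le> s) + (\<Sum>t\<in>A. grid_gap \<tau> A t * of_bool (t \<le> s))"
    using insert.hyps(1) b_notin gap_A by simp
  show ?case
  proof (cases "s = b")
    case True
    define M where "M = Max (insert \<tau> A)"
    have M: "M \<in> insert \<tau> A" unfolding M_def using insert.hyps(1) by (intro Max_in) auto
    have "{g\<in>insert b A. g < b} = A" using insert.hyps(2) by auto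
    then have "grid_gap \<tau> (insert b A) b = b - M" by (simp add: grid_gap_def M_def)
    moreover have "(\<Sum>t\<in>A. grid_gap \<tau> A t * of_bool (t \<le> b)) = (\<Sum>t\<in>A. grid_gap \<tau> A t * of_bool (t \<le> M))"
      using insert.hyps M_def by (intro sum.cong) auto
    ultimately show ?thesis using split IH[OF M] True by simp
  next
    case False
    then have "s \<in> insert \<tau> A" "s < b" using insert.prems insert.hyps(2) by auto
    then show ?thesis using split IH by simp
  qed
qed

lemma sum_grid_gap_abs_diff:
  assumes "finite G" "\<forall>g\<in>G. \<tau> < g" "a \<in> insert \<tau> G" "b \<in> insert \<tau> G"
  shows "(\<Sum>t\<in>G. grid_gap \<tau> G t * \<bar>of_bool (t \<le> a) - of_bool (t \<le> b)\<bar>) = \<bar>a - b\<bar>"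
proof -
  have "max a b \<in> insert \<tau> G" "min a b \<in> insert \<tau> G" using assms(3,4) by (simp_all add: max_def min_def)
  have "(\<Sum>t\<in>G. grid_gap \<tau> G t * \<bar>of_bool (t \<le> a) - of_bool (t \<le> b)\<bar>)
      = (\<Sum>t\<in>G. grid_gap \<tau> G t * of_bool (t \<le> max a b) - grid_gap \<tau> G t * of_bool (t \<le> min a b))"
    by (intro sum.cong) (auto simp: algebra_simps)
  also have "\<dots> = (max a b - \<tau>) - (min a b - \<tau>)"
    by (simp only: sum_subtractf sum_grid_gap_upto[OF assms(1,2) \<open>max a b \<in> _\<close>] sum_grid_gap_upto[OF assms(1,2) \<open>min a b \<in> _\<close>])
  finally show ?thesis by simp
qed

lemma sum_grid_gap_inverse_le_ln:
  assumes "finite G" "\<forall>g\<in>G. \<tau> < g" "0 < \<tau>" "X \<in> insert \<tau> G" "Y \<in> insert \<tau> G"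
  shows "(\<Sum>t\<in>G. grid_gap \<tau> G t * \<bar>of_bool (t \<le> X) / X - of_bool (t \<le> Y) / Y\<bar>) \<le> 2 * \<bar>ln X - ln Y\<bar>"
  using assms(4,5)
proof (induction X Y rule: linorder_wlog)
  case (le X Y)
  have pos: "\<tau> \<le> X" "0 < X" "0 < Y" using le assms(2,3) by auto
  have "(\<Sum>t\<in>G. grid_gap \<tau> G t * \<bar>of_bool (t \<le> Y) / Y - of_bool (t \<le> X) / X\<bar>)
      = (\<Sum>t\<in>G. (1/X - 1/Y) * (grid_gap \<tau> G t * of_bool (t \<le> X))
                 + (1/Y) * (grid_gap \<tau> G t * of_bool (t \<le> Y)) - (1/Y) * (grid_gap \<tau> G t * of_bool (t \<le> X)))"
    using le(1) pos frac_le[of 1 1 X Y] by (intro sum.cong) (auto simp: algebra_simps)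
  also have "\<dots> = (1/X - 1/Y) * (X - \<tau>) + (1/Y) * (Y - \<tau>) - (1/Y) * (X - \<tau>)"
    by (simp only: sum.distrib sum_subtractf sum_distrib_left[symmetric]
        sum_grid_gap_upto[OF assms(1,2) le(2)] sum_grid_gap_upto[OF assms(1,2) le(3)])
  also have "\<dots> \<le> 2 * (1 - X / Y)"
    using pos le(1) mult_right_mono[OF le(1), of \<tau>] assms(3) by (simp add: field_simps)
  also have "\<dots> \<le> 2 * (ln Y - ln X)"
    using ln_le_minus_one[of "X / Y"] pos by (simp add: ln_div)
  finally show ?case using le(1) pos by (simp add: abs_minus_commute)
next
  case (sym X Y)
  then show ?case by (simp add: abs_minus_commute)
qed

lemma sum_grid_gap_inverse_le_ln_max:
  assumes "finite G" "\<forall>g\<in>G. \<tau> < g" "0 < \<tau>" "0 < x" "0 < y"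
    and "max x \<tau> \<in> insert \<tau> G" "max y \<tau> \<in> insert \<tau> G"
  shows "(\<Sum>t\<in>G. grid_gap \<tau> G t * \<bar>of_bool (t \<le> x) / x - of_bool (t \<le> y) / y\<bar>)
      \<le> 2 * \<bar>ln (max x \<tau>) - ln (max y \<tau>)\<bar>"
proof -
  have clamp: "of_bool (t \<le> z) / z = of_bool (t \<le> max z \<tau>) / max z \<tau>" if "t \<in> G" for t z :: real
  proof -
    have "\<tau> < t" using assms(2) that by blast
    then show ?thesis by (cases "\<tau> \<le> z") (simp_all add: max_def not_le)
  qed
  have "(\<Sum>t\<in>G. grid_gap \<tau> G t * \<bar>of_bool (t \<le> x) / x - of_bool (t \<le> y) / y\<bar>)
      = (\<Sum>t\<in>G. grid_gap \<tau> G t * \<bar>of_bool (t \<le> max x \<tau>) / max x \<tau> - of_bool (t \<le> max y \<tau>) / max y \<tau>\<bar>)"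
    using clamp[of _ x] clamp[of _ y] by (intro sum.cong) simp_all
  also have "\<dots> \<le> 2 * \<bar>ln (max x \<tau>) - ln (max y \<tau>)\<bar>"
    by (rule sum_grid_gap_inverse_le_ln[OF assms(1-3,6,7)])
  finally show ?thesis .
qed

lemma is_distr_nonneg: "is_distr p \<Longrightarrow> 0 \<le> p i"
  unfolding is_distr_def by auto

lemma is_distr_sum_le_one:
  assumes "is_distr p" "finite B" shows "sum p B \<le> 1"
proof (rule finite_sum_le_has_sum)
  show "(p has_sum 1) UNIV" using assms(1) by (simp add: is_distr_def)
qed (use assms in \<open>auto simp: is_distr_nonneg\<close>)

lemma is_distr_le_one: "is_distr p \<Longrightarrow> p i \<le> 1"
  using is_distr_sum_le_one[of p "{i}"] by simp

lemma finite_is_distr_ge: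
  assumes "is_distr p" "0 < t" shows "finite {i. t \<le> p i}"
proof (rule ccontr)
  assume "infinite {i. t \<le> p i}"
  then obtain B where B: "finite B" "card B = nat \<lceil>1/t\<rceil> + 1" "B \<subseteq> {i. t \<le> p i}"
    using infinite_arbitrarily_large by blast
  have "1 / t < real (card B)"
    using B(2) real_nat_ceiling_ge[of "1/t"] by linarith
  then have "1 < real (card B) * t"
    using assms(2) by (simp add: field_simps)
  also have "\<dots> \<le> sum p B"
    using B(3) by (intro sum_bounded_below[of B t p, simplified]) auto
  also have "\<dots> \<le> 1" by (rule is_distr_sum_le_one[OF assms(1) B(1)])
  finally show False by simp
qed

lemma em_scheme_nonneg: "em_scheme p1 p2 m \<Longrightarrow> 0 \<le> m x y"
  unfolding em_scheme_def by auto

lemma em_scheme_support: "em_scheme p1 p2 m \<Longrightarrow> m x y \<noteq> 0 \<Longrightarrow> x \<in> {0<..1} \<and> y \<in> {0<..1}"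
  unfolding em_scheme_def by auto

lemma em_scheme_row:
  "em_scheme p1 p2 m \<Longrightarrow> x \<in> {0<..1} \<Longrightarrow> ((\<lambda>y. m x y) has_sum (x * real (hist p1 x))) {0<..1}"
  unfolding em_scheme_def by auto

lemma em_scheme_swap: "em_scheme p1 p2 m \<Longrightarrow> em_scheme p2 p1 (\<lambda>x y. m y x)"
  unfolding em_scheme_def by auto

lemma em_scheme_moves_attained_mass:
  assumes "em_scheme p1 p2 m" "m x y \<noteq> 0"
  shows "\<exists>i. p1 i = x"
proof -
  have x: "x \<in> {0<..1}" and y: "y \<in> {0<..1}" using em_scheme_support[OF assms] by auto
  have "m x y \<le> x * real (hist p1 x)"
    using finite_sum_le_has_sum[OF em_scheme_row[OF assms(1) x], of "{y}"] y
    by (simp add: em_scheme_nonneg[OF assms(1)])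
  moreover have "0 < m x y" using em_scheme_nonneg[OF assms(1)] assms(2) by (simp add: order_less_le)
  ultimately have "hist p1 x \<noteq> 0" by (cases "hist p1 x = 0") simp_all
  then show ?thesis unfolding hist_def by (metis (mono_tags) Collect_empty_eq card.empty)
qed

lemma has_sum_sum:
  fixes f :: "'i \<Rightarrow> 'a \<Rightarrow> 'b::topological_comm_monoid_add"
  assumes "finite I" "\<And>i. i \<in> I \<Longrightarrow> (f i has_sum s i) A"
  shows "((\<lambda>x. \<Sum>i\<in>I. f i x) has_sum (\<Sum>i\<in>I. s i)) A"
  using assms by (induction I rule: finite_induct) (auto intro: has_sum_add)

lemma has_sum_single_row:
  fixes g :: "'b \<Rightarrow> 'c::topological_comm_monoid_add"
  assumes "(g has_sum s) B" "w \<in> A"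
  shows "((\<lambda>(x,y). if x = w then g y else 0) has_sum s) (A \<times> B)"
proof -
  have "((\<lambda>(x,y). if x = w then g y else 0) has_sum s) (Pair w ` B)"
    using assms(1) by (subst has_sum_reindex) (auto simp: inj_on_def o_def)
  then show ?thesis
    by (rule has_sum_cong_neutral[THEN iffD1, rotated -1]) (use assms(2) in auto)
qed

lemma em_scheme_count_has_sum:
  assumes "is_distr p1" "em_scheme p1 p2 m" "0 < t"
  shows "((\<lambda>(x,y). m x y * (of_bool (t \<le> x) / x)) has_sum real (card {i. t \<le> p1 i})) ({0<..1} \<times> {0<..1})"
proof -
  define W where "W = p1 ` {i. t \<le> p1 i}"
  have fin: "finite {i. t \<le> p1 i}" by (rule finite_is_distr_ge[OF assms(1,3)])
  then have "finite W" by (simp add: W_def)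
  have W: "w \<in> {0<..1}" "t \<le> w" if "w \<in> W" for w
    using that assms(3) is_distr_le_one[OF assms(1)] by (auto simp: W_def)
  have "card {i. t \<le> p1 i} = (\<Sum>w\<in>W. card {i\<in>{i. t \<le> p1 i}. p1 i = w})"
    unfolding W_def using card_eq_sum sum.image_gen[OF fin, of "\<lambda>_. 1::nat" p1] by simp
  also have "\<dots> = (\<Sum>w\<in>W. hist p1 w)"
    using W(2) by (intro sum.cong refl) (auto simp: hist_def intro!: arg_cong[where f=card])
  finally have card_W: "real (card {i. t \<le> p1 i}) = (\<Sum>w\<in>W. real (hist p1 w))" by simp
  have rows: "((\<lambda>(x,y). if x = w then m w y / w else 0) has_sum real (hist p1 w)) ({0<..1} \<times> {0<..1})"
    if "w \<in> W" for w
  proof (rule has_sum_single_row[OF _ W(1)[OF that]])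
    show "((\<lambda>y. m w y / w) has_sum real (hist p1 w)) {0<..1}"
      using has_sum_divide_const[OF em_scheme_row[OF assms(2) W(1)[OF that]], of w] W(1)[OF that] by simp
  qed
  have "((\<lambda>p. \<Sum>w\<in>W. (\<lambda>(x,y). if x = w then m w y / w else 0) p) has_sum (\<Sum>w\<in>W. real (hist p1 w)))
      ({0<..1} \<times> {0<..1})"
    by (rule has_sum_sum[OF \<open>finite W\<close> rows])
  moreover have "(\<lambda>p. \<Sum>w\<in>W. (\<lambda>(x,y). if x = w then m w y / w else 0) p)
      = (\<lambda>(x,y). m x y * (of_bool (t \<le> x) / x))"
  proof (intro ext)
    fix p :: "real \<times> real"
    obtain x y where p: "p = (x,y)" by fastforce
    show "(\<Sum>w\<in>W. (\<lambda>(x,y). if x = w then m w y / w else 0) p) = (\<lambda>(x,y). m x y * (of_bool (t \<le> x) / x)) p"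
    proof (cases "x \<in> W")
      case False
      have "m x y = 0" if "t \<le> x"
        using em_scheme_moves_attained_mass[OF assms(2)] False that unfolding W_def by blast
      then show ?thesis using False \<open>finite W\<close> by (auto simp: p sum.delta')
    qed (use \<open>finite W\<close> W in \<open>auto simp: p sum.delta'\<close>)
  qed
  ultimately show ?thesis
    using card_W by simp
qed

lemma em_scheme_count_has_sum':
  assumes "is_distr p2" "em_scheme p1 p2 m" "0 < t"
  shows "((\<lambda>(x,y). m x y * (of_bool (t \<le> y) / y)) has_sum real (card {i. t \<le> p2 i})) ({0<..1} \<times> {0<..1})"
  using em_scheme_count_has_sum[OF assms(1) em_scheme_swap[OF assms(2)] assms(3)]
  by (subst has_sum_swap) (simp add: case_prod_unfold)

lemma abs_count_diff_le_transport:
  assumes "is_distr p1" "is_distr p2" "em_scheme p1 p2 m" "0 < t"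
  defines "D \<equiv> \<lambda>(x,y). m x y * \<bar>of_bool (t \<le> x) / x - of_bool (t \<le> y) / y\<bar>"
  shows "D summable_on ({0<..1} \<times> {0<..1})"
    and "\<bar>real (card {i. t \<le> p1 i}) - real (card {i. t \<le> p2 i})\<bar> \<le> infsum D ({0<..1} \<times> {0<..1})"
proof -
  define f where "f = (\<lambda>(x,y). m x y * (of_bool (t \<le> x) / x - of_bool (t \<le> y) / y))"
  have f: "(f has_sum real (card {i. t \<le> p1 i}) - real (card {i. t \<le> p2 i})) ({0<..1} \<times> {0<..1})"
    using has_sum_add[OF em_scheme_count_has_sum[OF assms(1,3,4)]
        has_sum_uminusI[OF em_scheme_count_has_sum'[OF assms(2,3,4)]]]
    by (simp add: f_def case_prod_unfold right_diff_distrib)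
  have D: "D = (\<lambda>p. norm (f p))"
    using em_scheme_nonneg[OF assms(3)] by (auto simp: D_def f_def abs_mult fun_eq_iff)
  show "D summable_on ({0<..1} \<times> {0<..1})"
    using f summable_on_iff_abs_summable_on_real unfolding D by (auto simp: summable_on_def)
  then show "\<bar>real (card {i. t \<le> p1 i}) - real (card {i. t \<le> p2 i})\<bar> \<le> infsum D ({0<..1} \<times> {0<..1})"
    using norm_infsum_bound[of f "{0<..1} \<times> {0<..1}"] infsumI[OF f] unfolding D by simp
qed

lemma ennreal_infsum:
  fixes f :: "'a \<Rightarrow> real"
  assumes "f summable_on A" "\<And>x. x \<in> A \<Longrightarrow> 0 \<le> f x"
  shows "ennreal (infsum f A) = infsum (\<lambda>x. ennreal (f x)) A"
proof -
  have "ennreal (infsum f A) = (SUP F\<in>{F. finite F \<and> F \<subseteq> A}. ennreal (sum f F))"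
    by (rule infsum_nonneg_is_SUPREMUM_ennreal[OF assms])
  also have "\<dots> = (SUP F\<in>{F. finite F \<and> F \<subseteq> A}. (\<Sum>x\<in>F. ennreal (f x)))"
    using assms(2) by (intro SUP_cong refl) (auto simp: sum_ennreal subset_iff)
  also have "\<dots> = infsum (\<lambda>x. ennreal (f x)) A"
    by (rule nonneg_infsum_complete[symmetric]) simp
  finally show ?thesis .
qed

lemma em_scheme_layer_weight_le_cost:
  assumes m: "em_scheme p1 p2 m" and \<tau>: "0 < \<tau>" and G: "finite G" "\<forall>g\<in>G. \<tau> < g"
    and G1: "\<And>i. \<tau> < p1 i \<Longrightarrow> p1 i \<in> G" and G2: "\<And>i. \<tau> < p2 i \<Longrightarrow> p2 i \<in> G"
  shows "m x y * (\<Sum>t\<in>G. grid_gap \<tau> G t * \<bar>of_bool (t \<le> x) / x - of_bool (t \<le> y) / y\<bar>)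
      \<le> 2 * (m x y * \<bar>ln (max x \<tau>) - ln (max y \<tau>)\<bar>)"
proof (cases "m x y = 0")
  case False
  have "x \<in> {0<..1}" "y \<in> {0<..1}" using em_scheme_support[OF m False] by auto
  moreover have "max x \<tau> \<in> insert \<tau> G" "max y \<tau> \<in> insert \<tau> G"
    using em_scheme_moves_attained_mass[OF m False]
      em_scheme_moves_attained_mass[OF em_scheme_swap[OF m], where x=y and y=x] False G1 G2
    by (auto simp: max_def)
  ultimately have "(\<Sum>t\<in>G. grid_gap \<tau> G t * \<bar>of_bool (t \<le> x) / x - of_bool (t \<le> y) / y\<bar>)
      \<le> 2 * \<bar>ln (max x \<tau>) - ln (max y \<tau>)\<bar>"
    by (intro sum_grid_gap_inverse_le_ln_max[OF G \<tau>]) auto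
  from mult_left_mono[OF this em_scheme_nonneg[OF m]] show ?thesis
    by (simp add: algebra_simps)
qed simp

lemma layer_count_diff_le_em_cost:
  assumes d1: "is_distr p1" and d2: "is_distr p2" and m: "em_scheme p1 p2 m" and \<tau>: "0 < \<tau>"
    and G: "finite G" "\<forall>g\<in>G. \<tau> < g"
    and G1: "\<And>i. \<tau> < p1 i \<Longrightarrow> p1 i \<in> G" and G2: "\<And>i. \<tau> < p2 i \<Longrightarrow> p2 i \<in> G"
  shows "ennreal (\<Sum>t\<in>G. grid_gap \<tau> G t * \<bar>real (card {i. t \<le> p1 i}) - real (card {i. t \<le> p2 i})\<bar>)
      \<le> 2 * em_cost \<tau> m"
proof -
  define P where "P = {0<..1::real} \<times> {0<..1::real}"
  define D where "D t = (\<lambda>(x,y). m x y * \<bar>of_bool (t \<le> x) / x - of_bool (t \<le> y) / y\<bar>)" for t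
  define H where "H p = (\<Sum>t\<in>G. grid_gap \<tau> G t * D t p)" for p
  define c where "c = (\<lambda>(x,y). m x y * \<bar>ln (max x \<tau>) - ln (max y \<tau>)\<bar>)"
  have t_pos: "0 < t" and gap_nonneg: "0 \<le> grid_gap \<tau> G t" if "t \<in> G" for t
    using G \<tau> that grid_gap_pos[OF G that] by auto
  have m_nonneg: "0 \<le> m x y" for x y by (rule em_scheme_nonneg[OF m])
  have H: "(H has_sum (\<Sum>t\<in>G. grid_gap \<tau> G t * infsum (D t) P)) P"
    unfolding H_def
  proof (rule has_sum_sum[OF G(1)])
    fix t assume "t \<in> G"
    then have "D t summable_on P"
      using abs_count_diff_le_transport(1)[OF d1 d2 m t_pos] by (simp add: D_def P_def)
    then show "((\<lambda>p. grid_gap \<tau> G t * D t p) has_sum grid_gap \<tau> G t * infsum (D t) P) P"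
      by (intro has_sum_cmult_right) simp
  qed
  have H_nonneg: "0 \<le> H p" for p
    unfolding H_def D_def using gap_nonneg m_nonneg by (auto intro!: sum_nonneg simp: case_prod_unfold)
  have H_le: "H (x,y) \<le> 2 * c (x,y)" for x y
    using em_scheme_layer_weight_le_cost[OF m \<tau> G G1 G2, of x y]
    by (simp add: H_def D_def c_def sum_distrib_left mult.left_commute)
  have "ennreal (\<Sum>t\<in>G. grid_gap \<tau> G t * \<bar>real (card {i. t \<le> p1 i}) - real (card {i. t \<le> p2 i})\<bar>)
      \<le> ennreal (\<Sum>t\<in>G. grid_gap \<tau> G t * infsum (D t) P)"
    using abs_count_diff_le_transport(2)[OF d1 d2 m t_pos] gap_nonneg
    by (intro ennreal_leI sum_mono mult_left_mono) (simp_all add: D_def P_def)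
  also have "\<dots> = infsum (\<lambda>p. ennreal (H p)) P"
    using H H_nonneg ennreal_infsum[of H P] by (simp add: has_sum_iff)
  also have "\<dots> \<le> infsum (\<lambda>p. ennreal (c p) + ennreal (c p)) P"
  proof (rule infsum_mono)
    fix p
    have "0 \<le> c p" using m_nonneg by (simp add: c_def case_prod_unfold)
    then show "ennreal (H p) \<le> ennreal (c p) + ennreal (c p)"
      using H_le[of "fst p" "snd p"] by (simp add: ennreal_plus[symmetric] ennreal_leI)
  qed (rule nonneg_summable_on_complete; simp)+
  also have "\<dots> = infsum (\<lambda>p. ennreal (c p)) P + infsum (\<lambda>p. ennreal (c p)) P"
    by (rule infsum_add) (rule nonneg_summable_on_complete; simp)+
  also have "infsum (\<lambda>p. ennreal (c p)) P = em_cost \<tau> m"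
    by (simp add: em_cost_def c_def P_def case_prod_unfold)
  finally show ?thesis by (simp add: mult_2)
qed

lemma finite_decreasing_enumeration:
  fixes p :: "'a::linorder \<Rightarrow> 'b::linorder"
  assumes "finite A"
  obtains f where "bij_betw f {..<card A} A" "\<And>k l. k \<le> l \<Longrightarrow> l < card A \<Longrightarrow> p (f l) \<le> p (f k)"
proof -
  define xs where "xs = rev (sort_key p (sorted_list_of_set A))"
  have "length xs = card A" "distinct xs" "set xs = A"
    using assms by (simp_all add: xs_def)
  then have "bij_betw ((!) xs) {..<card A} A"
    by (intro bij_betw_nth) auto
  moreover have "p (xs ! l) \<le> p (xs ! k)" if "k \<le> l" "l < card A" for k l
  proof -
    have "sorted (rev (map p xs))" by (simp add: xs_def rev_map[symmetric])
    then show ?thesis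
      using sorted_nth_mono[of "rev (map p xs)" "card A - Suc l" "card A - Suc k"] that \<open>length xs = card A\<close>
      by (simp add: rev_nth)
  qed
  ultimately show ?thesis using that by blast
qed

lemma antitone_le_iff_less_card:
  fixes a :: "nat \<Rightarrow> 'a::linorder"
  assumes anti: "\<And>k l. k \<le> l \<Longrightarrow> l < n \<Longrightarrow> a l \<le> a k" and k: "k < n"
  shows "t \<le> a k \<longleftrightarrow> k < card {j\<in>{..<n}. t \<le> a j}"
proof
  assume "t \<le> a k"
  then have "{..k} \<subseteq> {j\<in>{..<n}. t \<le> a j}"
    using anti k by (auto intro: order_trans)
  from card_mono[OF _ this] show "k < card {j\<in>{..<n}. t \<le> a j}" by simp
next
  assume less: "k < card {j\<in>{..<n}. t \<le> a j}"
  show "t \<le> a k"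
  proof (rule ccontr)
    assume "\<not> t \<le> a k"
    then have "{j\<in>{..<n}. t \<le> a j} \<subseteq> {..<k}"
      using anti by (force simp: not_le)
    from card_mono[OF _ this] show False using less by simp
  qed
qed

lemma sum_of_bool_less: "(\<Sum>k<n. of_bool (k < c) :: real) = real (min n c)"
  by (induction n) (auto simp: min_def)

lemma sum_abs_diff_of_bool_less:
  assumes "c1 \<le> n" "c2 \<le> n"
  shows "(\<Sum>k<n. \<bar>of_bool (k < c1) - of_bool (k < c2) :: real\<bar>) = \<bar>real c1 - real c2\<bar>"
proof -
  have "(\<Sum>k<n. \<bar>of_bool (k < c1) - of_bool (k < c2) :: real\<bar>)
      = (\<Sum>k<n. of_bool (k < max c1 c2) - of_bool (k < min c1 c2) :: real)"
    by (intro sum.cong) auto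
  also have "\<dots> = real (max c1 c2) - real (min c1 c2)"
    unfolding sum_subtractf sum_of_bool_less using assms by (simp add: min_def max_def)
  finally show ?thesis by linarith
qed

lemma sum_abs_diff_antitone_eq_layers:
  fixes a b :: "nat \<Rightarrow> real"
  assumes G: "finite G" "\<forall>g\<in>G. \<tau> < g"
    and a: "\<And>k l. k \<le> l \<Longrightarrow> l < n \<Longrightarrow> a l \<le> a k" "\<And>k. k < n \<Longrightarrow> a k \<in> insert \<tau> G"
    and b: "\<And>k l. k \<le> l \<Longrightarrow> l < n \<Longrightarrow> b l \<le> b k" "\<And>k. k < n \<Longrightarrow> b k \<in> insert \<tau> G"
  shows "(\<Sum>k<n. \<bar>a k - b k\<bar>)
      = (\<Sum>t\<in>G. grid_gap \<tau> G t * \<bar>real (card {k\<in>{..<n}. t \<le> a k}) - real (card {k\<in>{..<n}. t \<le> b k})\<bar>)"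
proof -
  have "(\<Sum>k<n. \<bar>a k - b k\<bar>) = (\<Sum>k<n. \<Sum>t\<in>G. grid_gap \<tau> G t * \<bar>of_bool (t \<le> a k) - of_bool (t \<le> b k)\<bar>)"
    using sum_grid_gap_abs_diff[OF G a(2) b(2)] by simp
  also have "\<dots> = (\<Sum>t\<in>G. grid_gap \<tau> G t * (\<Sum>k<n. \<bar>of_bool (t \<le> a k) - of_bool (t \<le> b k)\<bar>))"
    by (subst sum.swap) (simp add: sum_distrib_left)
  also have "\<dots> = (\<Sum>t\<in>G. grid_gap \<tau> G t * \<bar>real (card {k\<in>{..<n}. t \<le> a k}) - real (card {k\<in>{..<n}. t \<le> b k})\<bar>)"
  proof (intro sum.cong refl arg_cong2[where f="(*)"])
    fix t
    define ca where "ca = card {k\<in>{..<n}. t \<le> a k}"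
    define cb where "cb = card {k\<in>{..<n}. t \<le> b k}"
    have "ca \<le> card {..<n}" "cb \<le> card {..<n}"
      unfolding ca_def cb_def by (intro card_mono; auto)+
    moreover have "t \<le> a k \<longleftrightarrow> k < ca" "t \<le> b k \<longleftrightarrow> k < cb" if "k < n" for k
      unfolding ca_def cb_def using antitone_le_iff_less_card a(1) b(1) that by blast+
    ultimately show "(\<Sum>k<n. \<bar>of_bool (t \<le> a k) - of_bool (t \<le> b k)\<bar>) = \<bar>real ca - real cb\<bar>"
      by (simp add: sum_abs_diff_of_bool_less[symmetric])
  qed
  finally show ?thesis .
qed

lemma padded_decreasing_enumeration:
  assumes d: "is_distr p" and \<tau>: "0 < \<tau>" and n: "card {i. \<tau> < p i} \<le> n"
  obtains A f where "finite A" "{i. \<tau> < p i} \<subseteq> A" "infinite (- A)" "bij_betw f {..<n} A"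
    "\<And>k l. k \<le> l \<Longrightarrow> l < n \<Longrightarrow> p (f l) \<le> p (f k)"
proof -
  define L where "L = {i. \<tau> < p i}"
  have "finite L"
    unfolding L_def by (rule finite_subset[OF _ finite_is_distr_ge[OF d \<tau>]]) auto
  have zeros: "infinite {i. p i = 0}" using d by (simp add: is_distr_def)
  then obtain Z where Z: "finite Z" "card Z = n - card L" "Z \<subseteq> {i. p i = 0}"
    using infinite_arbitrarily_large by blast
  define A where "A = L \<union> Z"
  have "L \<inter> Z = {}" using Z(3) \<tau> by (auto simp: L_def)
  then have "card A = n"
    using card_Un_disjoint[OF \<open>finite L\<close> Z(1)] Z(2) n by (simp add: A_def L_def)
  have "finite A" using \<open>finite L\<close> Z(1) by (simp add: A_def)
  have "{i. p i = 0} - Z \<subseteq> - A" using \<tau> by (auto simp: A_def L_def)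
  then have "infinite (- A)" using zeros Z(1) finite_subset by fastforce
  obtain f where "bij_betw f {..<card A} A" "\<And>k l. k \<le> l \<Longrightarrow> l < card A \<Longrightarrow> p (f l) \<le> p (f k)"
    using finite_decreasing_enumeration[OF \<open>finite A\<close>] by blast
  then show ?thesis
    using that[OF \<open>finite A\<close> _ \<open>infinite (- A)\<close>] \<open>card A = n\<close> by (auto simp: A_def L_def)
qed

lemma card_level_set_enumeration:
  fixes p :: "'a \<Rightarrow> real"
  assumes f: "bij_betw f {..<n} A" and sub: "{i. \<tau> < p i} \<subseteq> A" and t: "\<tau> < t"
  shows "card {k\<in>{..<n}. t \<le> max (p (f k)) \<tau>} = card {i. t \<le> p i}"
proof -
  have "{k\<in>{..<n}. t \<le> max (p (f k)) \<tau>} = {k\<in>{..<n}. f k \<in> {i. t \<le> p i}}"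
    using t by (auto simp: le_max_iff_disj)
  also have "card \<dots> = card ({i. t \<le> p i} \<inter> A)"
    by (rule bij_betw_same_card[OF bij_betw_subset[OF f]] ; use f in \<open>auto simp: bij_betw_def\<close>)
  also have "{i. t \<le> p i} \<inter> A = {i. t \<le> p i}" using sub t by auto
  finally show ?thesis .
qed

lemma bij_extend_to_complements:
  fixes \<sigma> :: "'a::countable \<Rightarrow> 'b::countable"
  assumes "bij_betw \<sigma> A B" "infinite (- A)" "infinite (- B)"
  obtains \<pi> where "bij \<pi>" "\<And>i. i \<in> A \<Longrightarrow> \<pi> i = \<sigma> i" "\<And>i. i \<notin> A \<Longrightarrow> \<pi> i \<notin> B"
proof -
  have "bij_betw (from_nat_into (- A)) UNIV (- A)" "bij_betw (from_nat_into (- B)) UNIV (- B)"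
    using assms(2,3) by (simp_all add: bij_betw_from_nat_into)
  then have \<rho>: "bij_betw (from_nat_into (- B) \<circ> inv_into UNIV (from_nat_into (- A))) (- A) (- B)"
    by (intro bij_betw_trans[OF bij_betw_inv_into])
  define \<pi> where "\<pi> i = (if i \<in> A then \<sigma> i else (from_nat_into (- B) \<circ> inv_into UNIV (from_nat_into (- A))) i)" for i
  have "bij_betw \<pi> (A \<union> - A) (B \<union> - B)"
  proof (rule bij_betw_combine)
    show "bij_betw \<pi> A B" using assms(1) by (rule bij_betw_cong[THEN iffD1, rotated]) (simp add: \<pi>_def)
    show "bij_betw \<pi> (- A) (- B)" using \<rho> by (rule bij_betw_cong[THEN iffD1, rotated]) (simp add: \<pi>_def)
  qed simp
  moreover have "\<pi> i \<notin> B" if "i \<notin> A" for i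
    using bij_betw_apply[OF \<rho>] that by (simp add: \<pi>_def)
  ultimately show ?thesis
    using that[of \<pi>] by (simp add: \<pi>_def)
qed

lemma sorted_matching_has_sum:
  assumes d1: "is_distr p1" and d2: "is_distr p2" and \<tau>: "0 < \<tau>"
    and G: "finite G" "\<forall>g\<in>G. \<tau> < g"
    and G1: "\<And>i. \<tau> < p1 i \<Longrightarrow> p1 i \<in> G" and G2: "\<And>i. \<tau> < p2 i \<Longrightarrow> p2 i \<in> G"
  obtains \<pi> where "bij \<pi>"
    "((\<lambda>i. \<bar>max (p1 i) \<tau> - max (p2 (\<pi> i)) \<tau>\<bar>) has_sum
      (\<Sum>t\<in>G. grid_gap \<tau> G t * \<bar>real (card {i. t \<le> p1 i}) - real (card {i. t \<le> p2 i})\<bar>)) UNIV"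
proof -
  define n where "n = max (card {i. \<tau> < p1 i}) (card {i. \<tau> < p2 i})"
  obtain A f where A: "finite A" "{i. \<tau> < p1 i} \<subseteq> A" "infinite (- A)" "bij_betw f {..<n} A"
    and f: "\<And>k l. k \<le> l \<Longrightarrow> l < n \<Longrightarrow> p1 (f l) \<le> p1 (f k)"
    using padded_decreasing_enumeration[OF d1 \<tau>, of n] by (auto simp: n_def)
  obtain B g where B: "finite B" "{i. \<tau> < p2 i} \<subseteq> B" "infinite (- B)" "bij_betw g {..<n} B"
    and g: "\<And>k l. k \<le> l \<Longrightarrow> l < n \<Longrightarrow> p2 (g l) \<le> p2 (g k)"
    using padded_decreasing_enumeration[OF d2 \<tau>, of n] by (auto simp: n_def)
  have "bij_betw (g \<circ> the_inv_into {..<n} f) A B"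
    by (rule bij_betw_trans[OF bij_betw_the_inv_into[OF A(4)] B(4)])
  then obtain \<pi> where \<pi>: "bij \<pi>" "\<And>i. i \<in> A \<Longrightarrow> \<pi> i = (g \<circ> the_inv_into {..<n} f) i"
      "\<And>i. i \<notin> A \<Longrightarrow> \<pi> i \<notin> B"
    by (rule bij_extend_to_complements[OF _ A(3) B(3)]) blast
  have \<pi>_f: "\<pi> (f k) = g k" if "k < n" for k
    using \<pi>(2) bij_betw_apply[OF A(4)] the_inv_into_f_f[OF bij_betw_imp_inj_on[OF A(4)]] that by simp
  define a where "a k = max (p1 (f k)) \<tau>" for k
  define b where "b k = max (p2 (g k)) \<tau>" for k
  have "((\<lambda>i. \<bar>max (p1 i) \<tau> - max (p2 (\<pi> i)) \<tau>\<bar>) has_sum (\<Sum>i\<in>A. \<bar>max (p1 i) \<tau> - max (p2 (\<pi> i)) \<tau>\<bar>)) UNIV"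
  proof (rule has_sum_finite_neutralI[OF A(1)])
    fix i assume "i \<in> UNIV - A"
    then have "p1 i \<le> \<tau>" "p2 (\<pi> i) \<le> \<tau>" using A(2) B(2) \<pi>(3) by force+
    then show "\<bar>max (p1 i) \<tau> - max (p2 (\<pi> i)) \<tau>\<bar> = 0" by simp
  qed auto
  also have "(\<Sum>i\<in>A. \<bar>max (p1 i) \<tau> - max (p2 (\<pi> i)) \<tau>\<bar>)
      = (\<Sum>k<n. \<bar>max (p1 (f k)) \<tau> - max (p2 (\<pi> (f k))) \<tau>\<bar>)"
    by (rule sum.reindex_bij_betw[OF A(4), symmetric])
  also have "\<dots> = (\<Sum>k<n. \<bar>a k - b k\<bar>)"
    by (intro sum.cong refl) (simp add: \<pi>_f a_def b_def)
  also have "\<dots> = (\<Sum>t\<in>G. grid_gap \<tau> G t *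
      \<bar>real (card {k\<in>{..<n}. t \<le> a k}) - real (card {k\<in>{..<n}. t \<le> b k})\<bar>)"
  proof (rule sum_abs_diff_antitone_eq_layers[OF G])
    show "a l \<le> a k" "b l \<le> b k" if "k \<le> l" "l < n" for k l
      using f[OF that] g[OF that] by (auto simp: a_def b_def)
    show "a k \<in> insert \<tau> G" "b k \<in> insert \<tau> G" for k
      using G1[of "f k"] G2[of "g k"] by (auto simp: a_def b_def max_def)
  qed
  also have "\<dots> = (\<Sum>t\<in>G. grid_gap \<tau> G t * \<bar>real (card {i. t \<le> p1 i}) - real (card {i. t \<le> p2 i})\<bar>)"
    using G(2) card_level_set_enumeration[OF A(4) A(2)] card_level_set_enumeration[OF B(4) B(2)]
    by (intro sum.cong refl) (simp add: a_def b_def)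
  finally show ?thesis using that \<pi>(1) by blast
qed

theorem fact1:
  fixes \<tau> \<epsilon> :: real and p1 p2 :: "nat \<Rightarrow> real"
  assumes "0 < \<tau>" "\<tau> \<le> 1"
    and "is_distr p1" "is_distr p2"
    and "0 \<le> \<epsilon>"
    and "R_trunc \<tau> p1 p2 \<le> ennreal \<epsilon>"
  shows "\<exists>\<pi>. bij \<pi> \<and>
    (\<lambda>i. \<bar>max (p1 i) \<tau> - max (p2 (\<pi> i)) \<tau>\<bar>) summable_on UNIV \<and>
    (\<Sum>\<^sub>\<infinity>i. \<bar>max (p1 i) \<tau> - max (p2 (\<pi> i)) \<tau>\<bar>) \<le> 2 * \<epsilon>"
proof -
  define G where "G = p1 ` {i. \<tau> < p1 i} \<union> p2 ` {i. \<tau> < p2 i}"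
  define S where "S = (\<Sum>t\<in>G. grid_gap \<tau> G t * \<bar>real (card {i. t \<le> p1 i}) - real (card {i. t \<le> p2 i})\<bar>)"
  have "finite {i. \<tau> < p1 i}" "finite {i. \<tau> < p2 i}"
    using finite_is_distr_ge[OF assms(3,1)] finite_is_distr_ge[OF assms(4,1)] by (auto elim: finite_subset[rotated])
  then have G: "finite G" "\<forall>g\<in>G. \<tau> < g" "\<And>i. \<tau> < p1 i \<Longrightarrow> p1 i \<in> G" "\<And>i. \<tau> < p2 i \<Longrightarrow> p2 i \<in> G"
    by (auto simp: G_def)
  obtain \<pi> where "bij \<pi>" and \<pi>: "((\<lambda>i. \<bar>max (p1 i) \<tau> - max (p2 (\<pi> i)) \<tau>\<bar>) has_sum S) UNIV"
    using sorted_matching_has_sum[OF assms(3,4,1) G] unfolding S_def by blast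
  have "S \<ge> 0"
    unfolding S_def using grid_gap_pos[OF G(1,2)] by (intro sum_nonneg mult_nonneg_nonneg) (auto intro: less_imp_le)
  have half: "2 * ennreal (S / 2) = ennreal S"
    using ennreal_mult[of 2 "S / 2"] \<open>S \<ge> 0\<close> by simp
  have "ennreal (S / 2) \<le> R_trunc \<tau> p1 p2"
    unfolding R_trunc_def
  proof (rule INF_greatest)
    fix m assume "m \<in> {m. em_scheme p1 p2 m}"
    then have "ennreal S \<le> 2 * em_cost \<tau> m"
      unfolding S_def by (intro layer_count_diff_le_em_cost[OF assms(3,4) _ assms(1) G]) simp
    then show "ennreal (S / 2) \<le> em_cost \<tau> m"
      unfolding half[symmetric] by (simp add: ennreal_mult_le_mult_iff)
  qed
  with assms(5,6) have "S / 2 \<le> \<epsilon>"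
    using ennreal_le_iff order_trans by blast
  with \<open>bij \<pi>\<close> \<pi> show ?thesis
    by (auto simp: has_sum_iff)
qed

end
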